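(* Let $q>3$ be an odd prime power, let $f(x)=x^2$ on $\mathbb F_{q^2}$, and let $\theta\in\mathbb F_{q^2}^*$ be such that $\theta^{q+1}$ is a nonsquare in $\mathbb F_q$. Then in the unital $\mathcal U_\theta:=\{(x,t\theta):x\in\mathbb F_{q^2},t\in\mathbb F_q\}\cup\{(\infty)\}$ of $\Pi(f)$, the point $(\infty)$ is the unique vertex of Wilbrink's condition II in strong form.
   Context: $\Pi(f)$ for $f(x)=x^2$ is the projective plane with points $(x,y)\in\mathbb F_{q^2}^2$ and $(a)$ for $a\in\mathbb F_{q^2}\cup\{\infty\}$, lines $L_{a,b}=\{(x,f(x+a)-b):x\in\mathbb F_{q^2}\}\cup\{(a)\}$, $N_a=\{(a,y):y\in\mathbb F_{q^2}\}\cup\{(\infty)\}$ ($a,b\in\mathbb F_{q^2}$), $L_\infty=\{(a):a\in\mathbb F_{q^2}\cup\{\infty\}\}$. A unital (set of $q^3+1$ points meeting every line in $1$ or $q+1$ points) is regarded as a design whose blocks are its intersections with lines meeting it in $q+1$ points. A point $v$ of the unital is a vertex of Wilbrink's condition II in strong form if for every block $B$ with $v\notin B$, every block $C$ with $v\in C$ meeting $B$, and every point $w\in C$ distinct from $v$ and from the point of $B\cap C$, there exists a block $B'\neq C$ with $w\in B'$ such that $B'$ meets every block that contains $v$ and meets $B$. *)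

theory Defs
  imports Main "HOL-Computational_Algebra.Primes"
begin

text \<open>Points of the plane Pi(f) over a field 'a (intended: GF(q^2)):
  affine points (x,y), and points at infinity (a) with a in 'a, or (infinity),
  represented by Inf (Some a) and Inf None respectively.\<close>

datatype 'a pt = Aff 'a 'a | Inf "'a option"

definition lineL :: "('a \<Rightarrow> 'a) \<Rightarrow> 'a::field \<Rightarrow> 'a \<Rightarrow> 'a pt set" where
  "lineL f a b = {Aff x (f (x + a) - b) | x. True} \<union> {Inf (Some a)}"

definition lineN :: "'a \<Rightarrow> 'a pt set" where
  "lineN a = {Aff a y | y. True} \<union> {Inf None}"

definition lineInf :: "'a pt set" where
  "lineInf = {Inf z | z. True}"

definition lines :: "('a \<Rightarrow> 'a) \<Rightarrow> 'a::field pt set set" where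
  "lines f = {lineL f a b | a b. True} \<union> {lineN a | a. True} \<union> {lineInf}"

definition blocks :: "('a \<Rightarrow> 'a) \<Rightarrow> nat \<Rightarrow> 'a::field pt set \<Rightarrow> 'a pt set set" where
  "blocks f q U = {U \<inter> l | l. l \<in> lines f \<and> card (U \<inter> l) = q + 1}"

definition strong_II_vertex ::
  "('a \<Rightarrow> 'a) \<Rightarrow> nat \<Rightarrow> 'a::field pt set \<Rightarrow> 'a pt \<Rightarrow> bool" where
  "strong_II_vertex f q U v \<longleftrightarrow> v \<in> U \<and>
     (\<forall>B \<in> blocks f q U. \<forall>C \<in> blocks f q U. \<forall>w \<in> C.
        v \<notin> B \<longrightarrow> v \<in> C \<longrightarrow> B \<inter> C \<noteq> {} \<longrightarrow> w \<noteq> v \<longrightarrow> w \<notin> B \<longrightarrow>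
        (\<exists>B' \<in> blocks f q U. B' \<noteq> C \<and> w \<in> B' \<and>
           (\<forall>D \<in> blocks f q U. v \<in> D \<longrightarrow> D \<inter> B \<noteq> {} \<longrightarrow> B' \<inter> D \<noteq> {})))"

text \<open>The set U_theta, with F_q = {t. t^q = t} the subfield of order q.\<close>

definition U_theta :: "nat \<Rightarrow> 'a::field \<Rightarrow> 'a pt set" where
  "U_theta q \<theta> = {Aff x (t * \<theta>) | x t. t ^ q = t} \<union> {Inf None}"

end

theory Submission
  imports Defs "HOL-Number_Theory.Residues" "HOL-Computational_Algebra.Polynomial"
begin

text \<open>
  Let Fq = {t. t^q = t}, so that the affine points of the unital are the (x, y) with
  y \<in> \<theta>Fq.  The map \<delta> y = \<theta> y^q - \<theta>^q y is additive, has kernel \<theta>Fq and takes values c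
  with c^q = -c; hence the parabola L(a, b) meets the unital in as many points as there are
  z with \<delta>(z^2) = \<delta>(b).  Because \<theta>^(q+1) is a nonsquare in Fq, \<delta>(z^2) = 0 only for z = 0,
  and multiplying z by square roots of elements of Fq shows that all nonzero fibres of
  z \<mapsto> \<delta>(z^2) have the same size, namely q + 1.  So the blocks are the vertical lines and
  the parabolas L(a, b) with b \<notin> \<theta>Fq.

  Vertical translations by elements of \<theta>Fq preserve the unital, fix (\<infinity>) and every vertical
  line, and move any point of a vertical block to any other one; translating B yields the
  block B' required at (\<infinity>).

  At an affine point v = (x0, y0) take B = N(x0 + 1), C = N(x0) and w = (x0, y0 + \<theta>).  A
  candidate B' is a parabola through w with some parameter \<alpha>, the parabolas through v are
  D(d) = L(d - x0, d^2 - y0) with d \<noteq> 0, and D(d) meets B iff 1 + 2d \<in> \<theta>Fq.  If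
  1 + 2\<alpha> \<in> \<theta>Fq, then D(\<alpha>) misses B'.  Otherwise, putting \<theta> y = 2 (d - \<alpha>), the only common
  point of D(d) and B' lies in the unital iff (1 + 2\<alpha>y)/y^2 \<in> \<theta>Fq; if this held for all q
  admissible y, a nonzero cubic would have q > 3 roots.
\<close>

section \<open>Finite fields and polynomials\<close>

lemma card_le_card_image_mult:
  assumes "finite A" and "\<And>c. card {x\<in>A. f x = c} \<le> n"
  shows "card A \<le> card (f ` A) * n"
proof -
  have "card A = card (\<Union>c\<in>f ` A. {x\<in>A. f x = c})"
    by (rule arg_cong[of _ _ card]) auto
  also have "\<dots> \<le> (\<Sum>c\<in>f ` A. card {x\<in>A. f x = c})"
    using assms(1) by (intro card_UN_le) simp
  also have "\<dots> \<le> (\<Sum>c\<in>f ` A. n)"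
    by (intro sum_mono assms(2))
  finally show ?thesis by simp
qed

lemma card_power_eq_affine_le:
  fixes u c :: "'a::field"
  assumes "n \<ge> 2"
  shows "card {x. x ^ n = u * x + c} \<le> n"
proof -
  define P where "P = monom 1 n + [:- c, - u:]"
  have deg: "degree P = n"
    unfolding P_def using assms by (subst degree_add_eq_left) (auto simp: degree_monom_eq)
  hence "P \<noteq> 0" using assms by auto
  moreover have "{x. x ^ n = u * x + c} = {x. poly P x = 0}"
    by (auto simp: P_def poly_monom algebra_simps)
  ultimately show ?thesis using card_poly_roots_bound deg by metis
qed

lemma card_le_degree_if_roots:
  fixes p :: "'a::idom poly"
  assumes "p \<noteq> 0" and "\<And>x. x \<in> S \<Longrightarrow> poly p x = 0"
  shows "card S \<le> degree p"
proof -
  have "card S \<le> card {x. poly p x = 0}"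
    using assms by (intro card_mono poly_roots_finite) auto
  also have "\<dots> \<le> degree p" using assms(1) by (rule card_poly_roots_bound)
  finally show ?thesis .
qed

(* The library version finite_field_power_card_eq_same needs the sort finite_field,
   which a type variable of sort {field, finite} does not have. *)
lemma power_card_UNIV_finite_field:
  fixes x :: "'a::{field,finite}"
  shows "x ^ card (UNIV :: 'a set) = x"
proof (cases "x = 0")
  case True
  thus ?thesis using finite_UNIV_card_ge_0[where 'a = 'a] by simp
next
  case False
  let ?n = "card (UNIV :: 'a set)"
  have n: "?n = Suc (?n - 1)" using finite_UNIV_card_ge_0[where 'a = 'a] by simp
  have "(\<Prod>y\<in>UNIV - {0}. x * y) = (\<Prod>y\<in>UNIV - {0::'a}. y)"
    by (rule prod.reindex_bij_witness[of _ "\<lambda>y. y / x" "\<lambda>y. x * y"]) (use False in auto)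
  moreover have "(\<Prod>y\<in>UNIV - {0}. x * y) = x ^ (?n - 1) * (\<Prod>y\<in>UNIV - {0::'a}. y)"
    by (simp add: prod.distrib card_Diff_singleton)
  moreover have "(\<Prod>y\<in>UNIV - {0::'a}. y) \<noteq> 0" by simp
  ultimately have "x ^ (?n - 1) = 1" by simp
  thus ?thesis by (subst n) simp
qed

lemma prime_CHAR_finite_field: "prime CHAR('a::{field,finite})"
  using prime_CHAR_semidom finite_imp_CHAR_pos[where 'a = 'a] by simp

lemma CHAR_eq_if_card_prime_power:
  assumes "prime p" and "card (UNIV :: 'a::{field,finite} set) = p ^ m"
  shows "CHAR('a) = p"
proof -
  note prime_CHAR_finite_field[where 'a = 'a]
  moreover have "CHAR('a) dvd p ^ m" using CHAR_dvd_CARD assms(2) by metis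
  ultimately show ?thesis using assms(1) prime_dvd_power primes_dvd_imp_eq by metis
qed

lemma cubic_poly_nonzero:
  fixes T T' A A' M M' :: "'a::field"
  assumes two: "(2::'a) \<noteq> 0" and "T \<noteq> 0" and "M \<noteq> M'"
  shows "smult T ([:1 + 2*A'*M', 2*A':] * [:M, 1:]^2) - smult T' ([:1 + 2*A*M, 2*A:] * [:M', 1:]^2) \<noteq> 0"
proof
  assume "smult T ([:1 + 2*A'*M', 2*A':] * [:M, 1:]^2) - smult T' ([:1 + 2*A*M, 2*A:] * [:M', 1:]^2) = 0"
  hence c0: "T*(1+2*A'*M')*M^2 - T'*(1+2*A*M)*M'^2 = 0"
    and c1: "T*(2*(1+2*A'*M')*M + 2*A'*M^2) - T'*(2*(1+2*A*M)*M' + 2*A*M'^2) = 0"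
    and c2: "T*((1+2*A'*M') + 4*A'*M) - T'*((1+2*A*M) + 4*A*M') = 0"
    and c3: "2*T*A' - 2*T'*A = 0"
    by (simp_all add: power2_eq_square algebra_simps)
  \<comment> \<open>Eliminating \<open>A'\<close> by \<open>c3\<close> leaves relations that force \<open>T' = -T\<close> and then \<open>T (M - M')\<^sup>2 = 0\<close>.\<close>
  have c3': "T*A' - T'*A = 0" using c3 two by (simp add: algebra_simps)
  have c2': "T - T' + 2*T'*A*(M - M') = 0"
  proof -
    have "T - T' + 2*T'*A*(M - M') = (T*((1+2*A'*M') + 4*A'*M) - T'*((1+2*A*M) + 4*A*M'))
        - (2*M' + 4*M)*(T*A' - T'*A)"
      by (simp add: algebra_simps)
    thus ?thesis using c2 c3' by simp
  qed
  have c1': "2*(T*M - T'*M' + T'*A*(M^2 - M'^2)) = 0"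
  proof -
    have "2*(T*M - T'*M' + T'*A*(M^2 - M'^2))
        = (T*(2*(1+2*A'*M')*M + 2*A'*M^2) - T'*(2*(1+2*A*M)*M' + 2*A*M'^2))
          - (4*M*M' + 2*M^2)*(T*A' - T'*A)"
      by (simp add: algebra_simps power2_eq_square)
    thus ?thesis using c1 c3' by simp
  qed
  have c0': "T*M^2 - T'*M'^2 + 2*T'*A*M*M'*(M - M') = 0"
  proof -
    have "T*M^2 - T'*M'^2 + 2*T'*A*M*M'*(M - M')
        = (T*(1+2*A'*M')*M^2 - T'*(1+2*A*M)*M'^2) - 2*M'*M^2*(T*A' - T'*A)"
      by (simp add: algebra_simps power2_eq_square)
    thus ?thesis using c0 c3' by simp
  qed
  have "(T + T')*(M - M') = 2*(T*M - T'*M' + T'*A*(M^2 - M'^2)) - (M + M')*(T - T' + 2*T'*A*(M - M'))"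
    by (simp add: algebra_simps power2_eq_square)
  hence "T' = - T" using c1' c2' \<open>M \<noteq> M'\<close> by (simp add: add_eq_0_iff)
  hence "T*(M - M')^2 = (T*M^2 - T'*M'^2 + 2*T'*A*M*M'*(M - M')) - M*M'*(T - T' + 2*T'*A*(M - M'))"
    by (simp add: algebra_simps power2_eq_square)
  thus False using c0' c2' assms(2,3) by simp
qed

section \<open>Incidence in the plane\<close>

lemma Aff_in_lineL_iff: "Aff x y \<in> lineL f a b \<longleftrightarrow> y = f (x + a) - b"
  by (auto simp: lineL_def)

lemma Inf_in_lineL_iff: "Inf z \<in> lineL f a b \<longleftrightarrow> z = Some a"
  by (auto simp: lineL_def)

lemma Aff_in_lineN_iff: "Aff x y \<in> lineN a \<longleftrightarrow> x = a"
  by (auto simp: lineN_def)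

lemma Aff_in_parabola_through_iff:
  fixes x0 y0 d :: "'a::field"
  shows "Aff x y \<in> lineL (\<lambda>x. x ^ 2) (d - x0) (d ^ 2 - y0) \<longleftrightarrow> y = (x - x0) ^ 2 + 2 * d * (x - x0) + y0"
  by (simp add: Aff_in_lineL_iff power2_eq_square algebra_simps)

lemma lineL_in_lines: "lineL f a b \<in> lines f"
  by (auto simp: lines_def)

lemma lineN_in_lines: "lineN a \<in> lines f"
  by (auto simp: lines_def)

lemma Int_line_in_blocks: "l \<in> lines f \<Longrightarrow> card (U \<inter> l) = q + 1 \<Longrightarrow> U \<inter> l \<in> blocks f q U"
  by (auto simp: blocks_def)

lemma card_block: "B \<in> blocks f q U \<Longrightarrow> card B = q + 1"
  by (auto simp: blocks_def)

lemma Aff_in_lineL_shift_iff: "Aff x y \<in> lineL f a (b - s) \<longleftrightarrow> Aff x (y - s) \<in> lineL f a b"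
  by (auto simp: Aff_in_lineL_iff algebra_simps)

lemma parabolas_through_meet:
  fixes x0 y0 c d \<alpha> :: "'a::field"
  assumes "Aff x y \<in> lineL (\<lambda>x. x ^ 2) (d - x0) (d ^ 2 - y0)"
    and "Aff x y \<in> lineL (\<lambda>x. x ^ 2) (\<alpha> - x0) (\<alpha> ^ 2 - (y0 + c))"
  shows "2 * (d - \<alpha>) * (x - x0) = c" and "y = (x - x0) ^ 2 + 2 * d * (x - x0) + y0"
proof -
  have ordinate: "y = (x - x0) ^ 2 + 2 * d * (x - x0) + y0"
    using assms(1) by (simp add: Aff_in_parabola_through_iff)
  moreover have "y = (x - x0) ^ 2 + 2 * \<alpha> * (x - x0) + (y0 + c)"
    using assms(2) by (simp add: Aff_in_parabola_through_iff)
  ultimately have "2 * (d - \<alpha>) * (x - x0) - c = y - y"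
    by (simp add: algebra_simps)
  thus "2 * (d - \<alpha>) * (x - x0) = c" by simp
  show "y = (x - x0) ^ 2 + 2 * d * (x - x0) + y0" by (fact ordinate)
qed

lemma parabola_meet_ordinate:
  fixes x x0 y0 d \<alpha> c y :: "'a::field"
  assumes "2 * (d - \<alpha>) * (x - x0) = c" and two_d: "2 * d = 2 * \<alpha> + c * y"
    and "c \<noteq> 0" and "y \<noteq> 0"
  shows "(x - x0) ^ 2 + 2 * d * (x - x0) + y0 = (1 + 2 * \<alpha> * y) / y ^ 2 + (c + y0)"
proof -
  have "2 * (d - \<alpha>) = c * y" using two_d by (simp add: algebra_simps)
  with assms(1) have "c * (y * (x - x0)) = c * 1" by (simp add: mult.assoc)
  hence "y * (x - x0) = 1" using \<open>c \<noteq> 0\<close> by simp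
  hence "x - x0 = 1 / y" using \<open>y \<noteq> 0\<close> by (simp add: field_simps)
  hence "(x - x0) ^ 2 + 2 * d * (x - x0) + y0 = (1 / y) ^ 2 + (2 * \<alpha> + c * y) * (1 / y) + y0"
    unfolding two_d by simp
  also have "\<dots> = (1 + 2 * \<alpha> * y) / y ^ 2 + (c + y0)"
    using \<open>y \<noteq> 0\<close> by (simp add: field_simps power2_eq_square)
  finally show ?thesis .
qed

section \<open>The subfield of order q\<close>

locale field_of_square_order =
  fixes q :: nat and Fq :: "'a::{field,finite} set"
  defines "Fq \<equiv> {x. x ^ q = x}"
  assumes q_char_power: "\<exists>k. q = CHAR('a) ^ k"
    and card_UNIV: "card (UNIV :: 'a set) = q ^ 2"
begin

lemma q_ge_2: "q \<ge> 2"
proof -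
  have "card {0, 1 :: 'a} \<le> q ^ 2" using card_UNIV card_mono[of UNIV "{0, 1 :: 'a}"] by simp
  hence "2 \<le> q ^ 2" by simp
  moreover have "q ^ 2 \<le> 1" if "q \<le> 1" using power_mono[OF that, of 2] by simp
  ultimately show ?thesis by linarith
qed

lemma frobenius_add: "(x + y) ^ q = x ^ q + (y ^ q :: 'a)"
  using prime_CHAR_finite_field q_char_power freshmans_dream' by blast

lemma frobenius_minus: "(- x) ^ q = - (x ^ q :: 'a)"
  using frobenius_add[of x "- x"] q_ge_2 by (simp add: power_0_left eq_neg_iff_add_eq_0 add.commute)

lemma frobenius_diff: "(x - y) ^ q = x ^ q - (y ^ q :: 'a)"
  using frobenius_add[of x "- y"] frobenius_minus[of y] by simp

lemma frobenius_involution: "(x ^ q) ^ q = (x :: 'a)"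
  using power_card_UNIV_finite_field[of x] card_UNIV by (simp add: power_mult[symmetric] power2_eq_square)

lemma card_Fq_and_anti_Fq: "card Fq = q \<and> card {x::'a. x ^ q = - x} = q"
proof -
  define T where "T = {x::'a. x ^ q = - x}"
  have le_Fq: "card Fq \<le> q" using card_power_eq_affine_le[OF q_ge_2, of 1 0] by (simp add: Fq_def)
  have le_T: "card T \<le> q" using card_power_eq_affine_le[OF q_ge_2, of "- 1" 0] by (simp add: T_def)
  define f where "f z = z ^ q - z" for z :: 'a
  have "card {x\<in>UNIV. f x = c} \<le> card Fq" for c
  proof (cases "c \<in> range f")
    case True
    then obtain z0 where z0: "f z0 = c" by blast
    have "inj_on (\<lambda>z. z - z0) {x\<in>UNIV. f x = c}" by (auto simp: inj_on_def)
    moreover have "(\<lambda>z. z - z0) ` {x\<in>UNIV. f x = c} \<subseteq> Fq"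
      using z0 by (auto simp: f_def Fq_def frobenius_diff algebra_simps)
    ultimately show ?thesis by (rule card_inj_on_le) simp
  qed (auto intro: card_mono)
  hence "card (UNIV::'a set) \<le> card (range f) * card Fq"
    by (intro card_le_card_image_mult) simp
  also have "\<dots> \<le> card T * card Fq"
    by (intro mult_le_mono1 card_mono) (auto simp: T_def f_def frobenius_diff frobenius_involution)
  finally have le: "q * q \<le> card T * card Fq" using card_UNIV by (simp add: power2_eq_square)
  have "q * q \<le> q * card Fq" using le mult_le_mono1[OF le_T, of "card Fq"] by linarith
  moreover have "q * q \<le> card T * q" using le mult_le_mono2[OF le_Fq, of "card T"] by linarith
  ultimately show ?thesis using le_Fq le_T q_ge_2 by (simp add: T_def)
qed

lemma card_Fq: "card Fq = q"
  using card_Fq_and_anti_Fq by simp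

lemma card_anti_Fq: "card {x::'a. x ^ q = - x} = q"
  using card_Fq_and_anti_Fq by simp

lemma norm_in_Fq: "z ^ (q + 1) \<in> Fq"
proof -
  have "(z ^ (q + 1)) ^ q = (z ^ q) ^ q * z ^ q"
    by (simp add: power_mult_distrib power_add flip: power_mult)
  thus ?thesis by (simp add: Fq_def frobenius_involution)
qed

lemma zero_in_Fq: "0 \<in> Fq"
  using q_ge_2 by (simp add: Fq_def)

lemma Fq_divide: "a \<in> Fq \<Longrightarrow> b \<in> Fq \<Longrightarrow> a / b \<in> Fq"
  by (simp add: Fq_def power_divide)

lemma norm_image_Fq: "(\<lambda>z. z ^ (q + 1)) ` (UNIV - {0}) = Fq - {0::'a}"
proof (rule card_subset_eq)
  let ?N = "\<lambda>z::'a. z ^ (q + 1)"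
  show sub: "?N ` (UNIV - {0}) \<subseteq> Fq - {0}" using norm_in_Fq by auto
  have "card {z \<in> UNIV - {0}. ?N z = c} \<le> q + 1" for c
  proof (cases "c \<in> ?N ` (UNIV - {0})")
    case True
    then obtain z0 where z0: "z0 \<noteq> 0" "?N z0 = c" by blast
    have "inj_on (\<lambda>z. z / z0) {z \<in> UNIV - {0}. ?N z = c}" using z0 by (auto simp: inj_on_def)
    moreover have "(\<lambda>z. z / z0) ` {z \<in> UNIV - {0}. ?N z = c} \<subseteq> {x. x ^ (q + 1) = 0 * x + 1}"
      using z0 by (auto simp: power_divide)
    ultimately have "card {z \<in> UNIV - {0}. ?N z = c} \<le> card {x::'a. x ^ (q + 1) = 0 * x + 1}"
      by (rule card_inj_on_le) simp
    also have "\<dots> \<le> q + 1" using q_ge_2 by (intro card_power_eq_affine_le) simp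
    finally show ?thesis .
  next
    case False
    hence "{z \<in> UNIV - {0}. ?N z = c} = {}" by auto
    thus ?thesis by (metis card.empty zero_le)
  qed
  hence "card (UNIV - {0::'a}) \<le> card (?N ` (UNIV - {0})) * (q + 1)"
    by (intro card_le_card_image_mult) simp
  moreover have "card (UNIV - {0::'a}) = (q - 1) * (q + 1)"
    using card_UNIV q_ge_2 by (simp add: card_Diff_singleton power2_eq_square algebra_simps)
  ultimately have "(q - 1) * (q + 1) \<le> card (?N ` (UNIV - {0})) * (q + 1)" by simp
  hence "q - 1 \<le> card (?N ` (UNIV - {0}))" by (rule mult_right_le_imp_le) simp
  moreover have "card (Fq - {0}) = q - 1"
    using card_Fq zero_in_Fq by (simp add: card_Diff_singleton)
  moreover have "card (?N ` (UNIV - {0})) \<le> card (Fq - {0})" by (intro card_mono sub) simp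
  ultimately show "card (?N ` (UNIV - {0})) = card (Fq - {0})" by linarith
qed simp

lemma Fq_is_square:
  assumes "odd q" and "t \<in> Fq"
  shows "\<exists>m. m ^ 2 = t"
proof (cases "t = 0")
  case False
  hence "t \<in> (\<lambda>z. z ^ (q + 1)) ` (UNIV - {0})" using norm_image_Fq assms(2) by simp
  then obtain z where "z ^ (q + 1) = t" by blast
  moreover have "even (q + 1)" using assms(1) by simp
  then obtain h where "q + 1 = 2 * h" by (elim evenE)
  hence "(z ^ h) ^ 2 = z ^ (q + 1)" by (simp only: power_mult[symmetric] mult.commute)
  ultimately have "(z ^ h) ^ 2 = t" by simp
  thus ?thesis by blast
qed simp

lemma two_neq_zero:
  assumes "odd q"
  shows "(2::'a) \<noteq> 0"
proof
  assume "(2::'a) = 0"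
  hence "of_nat 2 = (0::'a)" by simp
  hence "CHAR('a) dvd 2" by (simp only: of_nat_eq_0_iff_char_dvd)
  hence "CHAR('a) = 2"
    using prime_CHAR_finite_field[where 'a = 'a] two_is_prime_nat primes_dvd_imp_eq by blast
  moreover obtain k where "q = CHAR('a) ^ k" using q_char_power by blast
  ultimately show False using assms q_ge_2 by (cases k) auto
qed

end

section \<open>The unital\<close>

locale unital_setting = field_of_square_order q Fq
  for q :: nat and Fq :: "'a::{field,finite} set" +
  fixes \<theta> :: 'a
  assumes odd_q: "odd q" and q_gt_3: "q > 3" and theta_nonzero: "\<theta> \<noteq> 0"
    and theta_norm_nonsquare: "\<not> (\<exists>s. s ^ q = s \<and> s ^ 2 = \<theta> ^ (q + 1))"
begin

definition \<theta>Fq :: "'a set" where "\<theta>Fq = (\<lambda>t. t * \<theta>) ` Fq"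

definition \<delta> :: "'a \<Rightarrow> 'a" where "\<delta> y = \<theta> * y ^ q - \<theta> ^ q * y"

lemma mem_\<theta>Fq_iff: "y \<in> \<theta>Fq \<longleftrightarrow> \<delta> y = 0"
proof
  assume "y \<in> \<theta>Fq"
  then obtain t where "t ^ q = t" "y = t * \<theta>" by (auto simp: \<theta>Fq_def Fq_def)
  thus "\<delta> y = 0" by (simp add: \<delta>_def power_mult_distrib)
next
  assume "\<delta> y = 0"
  hence "(y / \<theta>) ^ q = y / \<theta>"
    using theta_nonzero by (simp add: \<delta>_def power_divide field_simps)
  hence "y / \<theta> \<in> Fq" by (simp add: Fq_def)
  moreover have "y = y / \<theta> * \<theta>" using theta_nonzero by simp
  ultimately show "y \<in> \<theta>Fq" unfolding \<theta>Fq_def by blast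
qed

lemma \<delta>_add: "\<delta> (a + b) = \<delta> a + \<delta> b"
  by (simp add: \<delta>_def frobenius_add algebra_simps)

lemma \<delta>_diff: "\<delta> (a - b) = \<delta> a - \<delta> b"
  by (simp add: \<delta>_def frobenius_diff algebra_simps)

lemma \<delta>_anti_Fq: "\<delta> y ^ q = - \<delta> y"
  by (simp add: \<delta>_def frobenius_diff power_mult_distrib frobenius_involution)

lemma \<theta>Fq_add: "a \<in> \<theta>Fq \<Longrightarrow> b \<in> \<theta>Fq \<Longrightarrow> a + b \<in> \<theta>Fq"
  by (simp add: mem_\<theta>Fq_iff \<delta>_add)

lemma \<theta>Fq_diff: "a \<in> \<theta>Fq \<Longrightarrow> b \<in> \<theta>Fq \<Longrightarrow> a - b \<in> \<theta>Fq"
  by (simp add: mem_\<theta>Fq_iff \<delta>_diff)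

lemma \<theta>Fq_add_cancel: "s \<in> \<theta>Fq \<Longrightarrow> y + s \<in> \<theta>Fq \<longleftrightarrow> y \<in> \<theta>Fq"
  by (simp add: mem_\<theta>Fq_iff \<delta>_add)

lemma zero_in_\<theta>Fq: "0 \<in> \<theta>Fq"
  using zero_in_Fq by (force simp: \<theta>Fq_def)

lemma theta_in_\<theta>Fq: "\<theta> \<in> \<theta>Fq"
  by (simp add: mem_\<theta>Fq_iff \<delta>_def)

lemma scaled_in_\<theta>Fq: "t \<in> Fq \<Longrightarrow> t * \<theta> \<in> \<theta>Fq"
  unfolding \<theta>Fq_def by (rule imageI)

lemma square_notin_\<theta>Fq:
  assumes "z \<noteq> 0"
  shows "z ^ 2 \<notin> \<theta>Fq"
proof
  assume "z ^ 2 \<in> \<theta>Fq"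
  then obtain t where t: "t \<in> Fq" "z ^ 2 = t * \<theta>" by (auto simp: \<theta>Fq_def)
  hence "t \<noteq> 0" using assms by auto
  have "(z ^ (q + 1)) ^ 2 = (z ^ 2) ^ (q + 1)" by (simp only: power_mult[symmetric] mult.commute)
  also have "\<dots> = t ^ 2 * \<theta> ^ (q + 1)"
    using t by (simp add: power_mult_distrib Fq_def power2_eq_square)
  finally have "(z ^ (q + 1) / t) ^ 2 = \<theta> ^ (q + 1)"
    using \<open>t \<noteq> 0\<close> by (simp add: power_divide)
  moreover have "z ^ (q + 1) / t \<in> Fq" using Fq_divide[OF norm_in_Fq t(1)] .
  ultimately show False using theta_norm_nonsquare by (auto simp: Fq_def)
qed

lemma \<delta>_square_eq_0_iff: "\<delta> (z ^ 2) = 0 \<longleftrightarrow> z = 0"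
  using square_notin_\<theta>Fq[of z] q_ge_2 by (auto simp: mem_\<theta>Fq_iff \<delta>_def)

lemma card_\<delta>_square_fibre_mono:
  assumes "c ^ q = - c" "c \<noteq> 0" and "c' ^ q = - c'" "c' \<noteq> 0"
  shows "card {z. \<delta> (z ^ 2) = c} \<le> card {z. \<delta> (z ^ 2) = c'}"
proof -
  have "c' / c \<in> Fq" using assms by (simp add: Fq_def power_divide)
  then obtain m where m: "m ^ 2 = c' / c" using Fq_is_square[OF odd_q] by blast
  hence "m ^ 2 \<in> Fq" "m \<noteq> 0" using \<open>c' / c \<in> Fq\<close> assms by auto
  hence "\<delta> ((m * z) ^ 2) = m ^ 2 * \<delta> (z ^ 2)" for z
    by (simp add: \<delta>_def Fq_def power_mult_distrib algebra_simps)
  hence "(\<lambda>z. m * z) ` {z. \<delta> (z ^ 2) = c} \<subseteq> {z. \<delta> (z ^ 2) = c'}"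
    using m assms by auto
  moreover have "inj_on (\<lambda>z. m * z) {z. \<delta> (z ^ 2) = c}"
    using \<open>m \<noteq> 0\<close> by (auto simp: inj_on_def)
  ultimately show ?thesis by (intro card_inj_on_le) simp_all
qed

lemma card_square_shifts_in_\<theta>Fq:
  assumes "b \<notin> \<theta>Fq"
  shows "card {z. z ^ 2 - b \<in> \<theta>Fq} = q + 1"
proof -
  define T where "T = {c::'a. c ^ q = - c}"
  define F where "F c = {z. \<delta> (z ^ 2) = c}" for c
  have b: "\<delta> b \<in> T - {0}" using assms \<delta>_anti_Fq by (simp add: T_def mem_\<theta>Fq_iff)
  have same: "card (F c) = card (F (\<delta> b))" if "c \<in> T - {0}" for c
    using card_\<delta>_square_fibre_mono that b by (simp add: F_def T_def le_antisym)
  have "(UNIV :: 'a set) = (\<Union>c\<in>T. F c)" using \<delta>_anti_Fq by (auto simp: T_def F_def)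
  moreover have "card (\<Union>c\<in>T. F c) = (\<Sum>c\<in>T. card (F c))"
    by (rule card_UN_disjoint) (auto simp: F_def)
  ultimately have "q ^ 2 = (\<Sum>c\<in>T. card (F c))"
    using card_UNIV by simp
  also have "\<dots> = card (F 0) + (\<Sum>c\<in>T - {0}. card (F c))"
    using q_ge_2 by (intro sum.remove) (auto simp: T_def)
  also have "\<dots> = 1 + (q - 1) * card (F (\<delta> b))"
    using \<delta>_square_eq_0_iff card_anti_Fq q_ge_2 same
    by (simp add: F_def T_def card_Diff_singleton power_0_left)
  finally have "(q - 1) * (q + 1) = (q - 1) * card (F (\<delta> b))"
    using q_ge_2 by (cases q) (auto simp: power2_eq_square algebra_simps)
  hence "card (F (\<delta> b)) = q + 1"
    using q_ge_2 mult_left_cancel[of "q - 1" "q + 1" "card (F (\<delta> b))"] by simp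
  moreover have "{z. z ^ 2 - b \<in> \<theta>Fq} = F (\<delta> b)"
    by (simp add: F_def mem_\<theta>Fq_iff \<delta>_diff)
  ultimately show ?thesis by simp
qed

lemma square_shifts_in_\<theta>Fq:
  assumes "b \<in> \<theta>Fq"
  shows "{z. z ^ 2 - b \<in> \<theta>Fq} = {0}"
  using assms square_notin_\<theta>Fq \<theta>Fq_add[of "_ ^ 2 - b" b] \<theta>Fq_diff[OF zero_in_\<theta>Fq assms]
  by fastforce

abbreviation \<U> :: "'a pt set" where "\<U> \<equiv> U_theta q \<theta>"

abbreviation \<B> :: "'a pt set set" where "\<B> \<equiv> blocks (\<lambda>x. x ^ 2) q \<U>"

lemma Aff_in_U_iff: "Aff x y \<in> \<U> \<longleftrightarrow> y \<in> \<theta>Fq"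
  by (auto simp: U_theta_def \<theta>Fq_def Fq_def)

lemma Inf_in_U_iff: "Inf z \<in> \<U> \<longleftrightarrow> z = None"
  by (auto simp: U_theta_def)

lemma U_Int_lineN: "\<U> \<inter> lineN a = insert (Inf None) (Aff a ` \<theta>Fq)"
  by (auto simp: lineN_def Aff_in_U_iff Inf_in_U_iff)

lemma card_U_Int_lineN: "card (\<U> \<inter> lineN a) = q + 1"
proof -
  have "card \<theta>Fq = q"
    using card_Fq theta_nonzero by (simp add: \<theta>Fq_def card_image inj_on_def)
  thus ?thesis by (auto simp: U_Int_lineN card_insert_if card_image inj_on_def)
qed

lemma U_Int_lineInf: "\<U> \<inter> lineInf = {Inf None}"
  by (auto simp: lineInf_def Inf_in_U_iff)

lemma card_U_Int_lineL: "card (\<U> \<inter> lineL (\<lambda>x. x ^ 2) a b) = card {z. z ^ 2 - b \<in> \<theta>Fq}"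
proof -
  have "\<U> \<inter> lineL (\<lambda>x. x ^ 2) a b = (\<lambda>z. Aff (z - a) (z ^ 2 - b)) ` {z. z ^ 2 - b \<in> \<theta>Fq}"
    by (force simp: lineL_def Aff_in_U_iff Inf_in_U_iff)
  thus ?thesis by (simp add: card_image inj_on_def)
qed

lemma lineN_block: "\<U> \<inter> lineN a \<in> \<B>"
  using card_U_Int_lineN by (intro Int_line_in_blocks lineN_in_lines)

lemma lineL_block_iff: "\<U> \<inter> lineL (\<lambda>x. x ^ 2) a b \<in> \<B> \<longleftrightarrow> b \<notin> \<theta>Fq"
proof
  assume "\<U> \<inter> lineL (\<lambda>x. x ^ 2) a b \<in> \<B>"
  hence card: "card {z. z ^ 2 - b \<in> \<theta>Fq} = q + 1"
    using card_block card_U_Int_lineL by metis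
  show "b \<notin> \<theta>Fq"
  proof
    assume "b \<in> \<theta>Fq"
    hence "card {z. z ^ 2 - b \<in> \<theta>Fq} = 1" by (simp add: square_shifts_in_\<theta>Fq)
    thus False using card q_gt_3 by simp
  qed
next
  assume "b \<notin> \<theta>Fq"
  thus "\<U> \<inter> lineL (\<lambda>x. x ^ 2) a b \<in> \<B>"
    using card_U_Int_lineL card_square_shifts_in_\<theta>Fq by (intro Int_line_in_blocks lineL_in_lines) simp
qed

lemma blocks_cases:
  assumes "B \<in> \<B>"
  obtains (vertical) c where "B = \<U> \<inter> lineN c"
    | (parabola) a b where "b \<notin> \<theta>Fq" and "B = \<U> \<inter> lineL (\<lambda>x. x ^ 2) a b"
proof -
  obtain l where l: "l \<in> lines (\<lambda>x. x ^ 2)" "B = \<U> \<inter> l" "card (\<U> \<inter> l) = q + 1"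
    using assms unfolding blocks_def by blast
  from l(1) consider (L) a b where "l = lineL (\<lambda>x. x ^ 2) a b" | (N) c where "l = lineN c"
    | (I) "l = lineInf"
    unfolding lines_def by blast
  thus ?thesis
  proof cases
    case L
    thus ?thesis using parabola assms l(2) lineL_block_iff by simp
  next
    case N
    thus ?thesis using vertical l(2) by simp
  next
    case I
    thus ?thesis using l(3) U_Int_lineInf q_gt_3 by simp
  qed
qed

lemma strong_II_vertex_infinity: "strong_II_vertex (\<lambda>x. x ^ 2) q \<U> (Inf None)"
  unfolding strong_II_vertex_def
proof (intro conjI ballI impI)
  show "Inf None \<in> \<U>" by (simp add: Inf_in_U_iff)
next
  fix B C w
  assume B: "B \<in> \<B>" and C: "C \<in> \<B>" and "w \<in> C" and "Inf None \<notin> B" and "Inf None \<in> C"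
    and "B \<inter> C \<noteq> {}" and "w \<noteq> Inf None"
  obtain a b where "b \<notin> \<theta>Fq" and B_eq: "B = \<U> \<inter> lineL (\<lambda>x. x ^ 2) a b"
    using B by (cases rule: blocks_cases) (use \<open>Inf None \<notin> B\<close> in \<open>auto simp: U_Int_lineN\<close>)
  obtain c where C_eq: "C = \<U> \<inter> lineN c"
    using C by (cases rule: blocks_cases) (use \<open>Inf None \<in> C\<close> in \<open>auto simp: Inf_in_lineL_iff\<close>)
  obtain y1 where y1: "y1 \<in> \<theta>Fq" "Aff c y1 \<in> B"
    using \<open>B \<inter> C \<noteq> {}\<close> \<open>Inf None \<notin> B\<close> by (auto simp: C_eq U_Int_lineN)
  obtain y2 where y2: "y2 \<in> \<theta>Fq" "w = Aff c y2"
    using \<open>w \<in> C\<close> \<open>w \<noteq> Inf None\<close> by (auto simp: C_eq U_Int_lineN)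
  define s where "s = y2 - y1"
  have s: "s \<in> \<theta>Fq" using y1 y2 by (simp add: s_def \<theta>Fq_diff)
  define B' where "B' = \<U> \<inter> lineL (\<lambda>x. x ^ 2) a (b - s)"
  show "\<exists>B'\<in>\<B>. B' \<noteq> C \<and> w \<in> B' \<and> (\<forall>D\<in>\<B>. Inf None \<in> D \<longrightarrow> D \<inter> B \<noteq> {} \<longrightarrow> B' \<inter> D \<noteq> {})"
  proof (intro bexI conjI ballI impI)
    have "b - s \<notin> \<theta>Fq" using \<open>b \<notin> \<theta>Fq\<close> \<theta>Fq_add[OF _ s, of "b - s"] by auto
    thus "B' \<in> \<B>" by (simp add: B'_def lineL_block_iff)
    show "B' \<noteq> C" using \<open>Inf None \<in> C\<close> by (auto simp: B'_def Inf_in_lineL_iff)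
    show "w \<in> B'" using y1 y2 by (simp add: B'_def B_eq Aff_in_lineL_shift_iff Aff_in_U_iff s_def)
  next
    fix D assume "D \<in> \<B>" "Inf None \<in> D" "D \<inter> B \<noteq> {}"
    then obtain d where D_eq: "D = \<U> \<inter> lineN d"
      by (cases rule: blocks_cases) (auto simp: Inf_in_lineL_iff)
    obtain y where "y \<in> \<theta>Fq" "Aff d y \<in> B"
      using \<open>D \<inter> B \<noteq> {}\<close> \<open>Inf None \<notin> B\<close> by (auto simp: D_eq U_Int_lineN)
    hence "Aff d (y + s) \<in> B' \<inter> D"
      using s by (simp add: B'_def B_eq D_eq Aff_in_lineL_shift_iff Aff_in_U_iff Aff_in_lineN_iff \<theta>Fq_add)
    thus "B' \<inter> D \<noteq> {}" by blast
  qed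
qed

lemma quotient_in_\<theta>Fq_iff:
  assumes "y \<noteq> 0"
  shows "(1 + 2 * \<alpha> * y) / y ^ 2 \<in> \<theta>Fq \<longleftrightarrow>
    \<theta> * (1 + 2 * \<alpha> ^ q * y ^ q) * y ^ 2 - \<theta> ^ q * (1 + 2 * \<alpha> * y) * (y ^ q) ^ 2 = 0"
proof -
  have "(1 + 2 * \<alpha> * y) / y ^ 2 \<in> \<theta>Fq \<longleftrightarrow>
      \<theta> * ((1 + 2 * \<alpha> ^ q * y ^ q) / (y ^ q) ^ 2) = \<theta> ^ q * ((1 + 2 * \<alpha> * y) / y ^ 2)"
    using frobenius_add[of 1 1]
    by (simp add: mem_\<theta>Fq_iff \<delta>_def power_divide frobenius_add power_mult_distrib
        flip: power_mult mult.commute)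
  also have "\<dots> \<longleftrightarrow> \<theta> * (1 + 2 * \<alpha> ^ q * y ^ q) * y ^ 2 - \<theta> ^ q * (1 + 2 * \<alpha> * y) * (y ^ q) ^ 2 = 0"
    using assms by (simp add: field_simps)
  finally show ?thesis .
qed

lemma exists_separating_parameter:
  assumes "1 + 2 * \<alpha> \<notin> \<theta>Fq"
  shows "\<exists>y. y \<noteq> 0 \<and> 1 + 2 * \<alpha> + \<theta> * y \<in> \<theta>Fq \<and> (1 + 2 * \<alpha> * y) / y ^ 2 \<notin> \<theta>Fq"
proof (rule ccontr)
  assume contra: "\<not> ?thesis"
  define m where "m = - (1 + 2 * \<alpha>) / \<theta>"
  have "m \<notin> Fq"
  proof
    assume "m \<in> Fq"
    hence "- m \<in> Fq" by (simp add: Fq_def frobenius_minus)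
    hence "(- m) * \<theta> \<in> \<theta>Fq" by (rule scaled_in_\<theta>Fq)
    thus False using assms theta_nonzero by (simp add: m_def add.commute)
  qed
  \<comment> \<open>For \<open>k \<in> Fq\<close>, \<open>y = m + k\<close> satisfies \<open>1 + 2\<alpha> + \<theta>y = k\<theta> \<in> \<theta>Fq\<close>, so \<open>k\<close> is a root of \<open>P\<close>.\<close>
  define P where "P = smult \<theta> ([:1 + 2 * \<alpha> ^ q * m ^ q, 2 * \<alpha> ^ q:] * [:m, 1:] ^ 2)
    - smult (\<theta> ^ q) ([:1 + 2 * \<alpha> * m, 2 * \<alpha>:] * [:m ^ q, 1:] ^ 2)"
  have "P \<noteq> 0" unfolding P_def
    using \<open>m \<notin> Fq\<close> by (intro cubic_poly_nonzero two_neq_zero odd_q theta_nonzero) (simp add: Fq_def)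
  have "poly P k = 0" if "k \<in> Fq" for k
  proof -
    define y where "y = m + k"
    have yq: "y ^ q = m ^ q + k" using that by (simp add: y_def Fq_def frobenius_add)
    have "y \<noteq> 0"
    proof
      assume "y = 0"
      hence "m = - k" by (simp add: y_def eq_neg_iff_add_eq_0)
      thus False using \<open>m \<notin> Fq\<close> that by (simp add: Fq_def frobenius_minus)
    qed
    have "1 + 2 * \<alpha> + \<theta> * y = k * \<theta>"
      using theta_nonzero by (simp add: y_def m_def field_simps)
    hence "1 + 2 * \<alpha> + \<theta> * y \<in> \<theta>Fq" using that by (simp add: scaled_in_\<theta>Fq)
    hence "(1 + 2 * \<alpha> * y) / y ^ 2 \<in> \<theta>Fq" using contra \<open>y \<noteq> 0\<close> by blast
    hence root: "\<theta> * (1 + 2 * \<alpha> ^ q * y ^ q) * y ^ 2 - \<theta> ^ q * (1 + 2 * \<alpha> * y) * (y ^ q) ^ 2 = 0"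
      using \<open>y \<noteq> 0\<close> by (simp add: quotient_in_\<theta>Fq_iff)
    have "poly P k = \<theta> * (1 + 2 * \<alpha> ^ q * (m ^ q + k)) * (m + k) ^ 2
        - \<theta> ^ q * (1 + 2 * \<alpha> * (m + k)) * (m ^ q + k) ^ 2"
      by (simp add: P_def power2_eq_square algebra_simps)
    also have "\<dots> = 0" using root unfolding yq unfolding y_def .
    finally show ?thesis .
  qed
  with \<open>P \<noteq> 0\<close> have "card Fq \<le> degree P" by (rule card_le_degree_if_roots)
  also have "\<dots> \<le> 3" unfolding P_def
    by (intro degree_diff_le order.trans[OF degree_smult_le] order.trans[OF degree_mult_le])
      (simp_all add: power2_eq_square)
  finally show False using card_Fq q_gt_3 by simp
qed

lemma parabola_block_through:
  assumes "y0 \<in> \<theta>Fq" and "d \<noteq> 0"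
  shows "\<U> \<inter> lineL (\<lambda>x. x ^ 2) (d - x0) (d ^ 2 - y0) \<in> \<B>"
proof -
  have "d ^ 2 - y0 \<notin> \<theta>Fq"
    using \<theta>Fq_add[OF _ assms(1), of "d ^ 2 - y0"] square_notin_\<theta>Fq[OF assms(2)] by auto
  thus ?thesis by (simp add: lineL_block_iff)
qed

lemma blocks_through_affine_point:
  assumes "B \<in> \<B>" and "Aff x0 y0 \<in> B"
  shows "B = \<U> \<inter> lineN x0 \<or> (\<exists>d. d \<noteq> 0 \<and> B = \<U> \<inter> lineL (\<lambda>x. x ^ 2) (d - x0) (d ^ 2 - y0))"
  using assms(1)
proof (cases rule: blocks_cases)
  case (vertical c)
  thus ?thesis using assms(2) by (simp add: Aff_in_lineN_iff)
next
  case (parabola a b)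
  have "y0 \<in> \<theta>Fq" using assms(2) by (simp add: parabola Aff_in_U_iff)
  have b: "b = (x0 + a) ^ 2 - y0" using assms(2) by (simp add: parabola Aff_in_lineL_iff)
  have "x0 + a \<noteq> 0"
  proof
    assume "x0 + a = 0"
    hence "b = 0 - y0" by (simp add: b)
    thus False using parabola(1) \<theta>Fq_diff[OF zero_in_\<theta>Fq \<open>y0 \<in> \<theta>Fq\<close>] by simp
  qed
  moreover have "B = \<U> \<inter> lineL (\<lambda>x. x ^ 2) ((x0 + a) - x0) ((x0 + a) ^ 2 - y0)"
    by (simp add: parabola b)
  ultimately show ?thesis by blast
qed

lemma parabola_through_meets_vertical:
  assumes "y0 \<in> \<theta>Fq" and "1 + 2 * d \<in> \<theta>Fq"
  shows "Aff (x0 + 1) (1 + 2 * d + y0) \<in> (\<U> \<inter> lineL (\<lambda>x. x ^ 2) (d - x0) (d ^ 2 - y0)) \<inter> (\<U> \<inter> lineN (x0 + 1))"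
  using assms by (simp add: Aff_in_parabola_through_iff Aff_in_U_iff Aff_in_lineN_iff \<theta>Fq_add)

lemma strong_II_vertex_affine_parameter:
  assumes y0: "y0 \<in> \<theta>Fq" and "strong_II_vertex (\<lambda>x. x ^ 2) q \<U> (Aff x0 y0)"
  obtains \<alpha> where "\<And>d. d \<noteq> 0 \<Longrightarrow> 1 + 2 * d \<in> \<theta>Fq \<Longrightarrow>
    \<exists>x. 2 * (d - \<alpha>) * (x - x0) = \<theta> \<and> (x - x0) ^ 2 + 2 * d * (x - x0) + y0 \<in> \<theta>Fq"
proof -
  have vertex: "\<forall>B\<in>\<B>. \<forall>C\<in>\<B>. \<forall>w\<in>C. Aff x0 y0 \<notin> B \<longrightarrow> Aff x0 y0 \<in> C \<longrightarrow> B \<inter> C \<noteq> {}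
      \<longrightarrow> w \<noteq> Aff x0 y0 \<longrightarrow> w \<notin> B \<longrightarrow> (\<exists>B'\<in>\<B>. B' \<noteq> C \<and> w \<in> B' \<and>
        (\<forall>D\<in>\<B>. Aff x0 y0 \<in> D \<longrightarrow> D \<inter> B \<noteq> {} \<longrightarrow> B' \<inter> D \<noteq> {}))"
    using assms(2) by (simp add: strong_II_vertex_def)
  let ?B = "\<U> \<inter> lineN (x0 + 1)" and ?C = "\<U> \<inter> lineN x0"
  define D where "D d = \<U> \<inter> lineL (\<lambda>x. x ^ 2) (d - x0) (d ^ 2 - y0)" for d
  have "y0 + \<theta> \<in> \<theta>Fq" using y0 theta_in_\<theta>Fq by (rule \<theta>Fq_add)
  hence "Aff x0 (y0 + \<theta>) \<in> ?C" "Aff x0 y0 \<notin> ?B" "Aff x0 y0 \<in> ?C" "?B \<inter> ?C \<noteq> {}"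
    "Aff x0 (y0 + \<theta>) \<noteq> Aff x0 y0" "Aff x0 (y0 + \<theta>) \<notin> ?B"
    using y0 theta_nonzero by (auto simp: U_Int_lineN)
  from vertex[rule_format, OF lineN_block lineN_block this]
  obtain B' where "B' \<in> \<B>" and "B' \<noteq> ?C \<and> Aff x0 (y0 + \<theta>) \<in> B' \<and>
      (\<forall>D\<in>\<B>. Aff x0 y0 \<in> D \<longrightarrow> D \<inter> ?B \<noteq> {} \<longrightarrow> B' \<inter> D \<noteq> {})"
    by (rule bexE)
  hence B': "B' \<in> \<B>" "B' \<noteq> ?C" "Aff x0 (y0 + \<theta>) \<in> B'"
    and meets: "\<And>D. D \<in> \<B> \<Longrightarrow> Aff x0 y0 \<in> D \<Longrightarrow> D \<inter> ?B \<noteq> {} \<Longrightarrow> B' \<inter> D \<noteq> {}"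
    by simp_all
  obtain \<alpha> where B'_eq: "B' = \<U> \<inter> lineL (\<lambda>x. x ^ 2) (\<alpha> - x0) (\<alpha> ^ 2 - (y0 + \<theta>))"
    using blocks_through_affine_point[OF B'(1,3)] B'(2) by blast
  show ?thesis
  proof (rule that)
    fix d assume "d \<noteq> 0" and "1 + 2 * d \<in> \<theta>Fq"
    have "D d \<inter> ?B \<noteq> {}"
      using parabola_through_meets_vertical[OF y0 \<open>1 + 2 * d \<in> \<theta>Fq\<close>, of x0] by (auto simp: D_def)
    moreover have "Aff x0 y0 \<in> D d"
      using y0 by (simp add: D_def Aff_in_U_iff Aff_in_parabola_through_iff)
    moreover have "D d \<in> \<B>" unfolding D_def using y0 \<open>d \<noteq> 0\<close> by (rule parabola_block_through)
    ultimately have "B' \<inter> D d \<noteq> {}" using meets by blast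
    then obtain P where P: "P \<in> B' \<inter> D d" by blast
    then obtain x y where "P = Aff x y"
      by (cases P) (auto simp: B'_eq Inf_in_U_iff Inf_in_lineL_iff)
    with P have "Aff x y \<in> B' \<inter> D d" by simp
    thus "\<exists>x. 2 * (d - \<alpha>) * (x - x0) = \<theta> \<and> (x - x0) ^ 2 + 2 * d * (x - x0) + y0 \<in> \<theta>Fq"
      using parabolas_through_meet[of x y d x0 y0 \<alpha> \<theta>] by (auto simp: B'_eq D_def Aff_in_U_iff)
  qed
qed

lemma affine_point_not_strong_II_vertex:
  assumes y0: "y0 \<in> \<theta>Fq"
  shows "\<not> strong_II_vertex (\<lambda>x. x ^ 2) q \<U> (Aff x0 y0)"
proof
  assume "strong_II_vertex (\<lambda>x. x ^ 2) q \<U> (Aff x0 y0)"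
  then obtain \<alpha> where meet: "\<And>d. d \<noteq> 0 \<Longrightarrow> 1 + 2 * d \<in> \<theta>Fq \<Longrightarrow>
    \<exists>x. 2 * (d - \<alpha>) * (x - x0) = \<theta> \<and> (x - x0) ^ 2 + 2 * d * (x - x0) + y0 \<in> \<theta>Fq"
    using strong_II_vertex_affine_parameter[OF y0] by blast
  show False
  proof (cases "1 + 2 * \<alpha> \<in> \<theta>Fq")
    case True
    have "\<alpha> \<noteq> 0" using True square_notin_\<theta>Fq[of 1] by auto
    thus False using meet[OF _ True] theta_nonzero by auto
  next
    case False
    then obtain y where "y \<noteq> 0" and y: "1 + 2 * \<alpha> + \<theta> * y \<in> \<theta>Fq" "(1 + 2 * \<alpha> * y) / y ^ 2 \<notin> \<theta>Fq"
      using exists_separating_parameter by blast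
    define d where "d = \<alpha> + \<theta> * y / 2"
    have two_d: "2 * d = 2 * \<alpha> + \<theta> * y" using two_neq_zero[OF odd_q] by (simp add: d_def field_simps)
    hence "1 + 2 * d \<in> \<theta>Fq" using y(1) by (simp add: add.assoc)
    moreover have "d \<noteq> 0" using calculation square_notin_\<theta>Fq[of 1] by auto
    ultimately obtain x where x: "2 * (d - \<alpha>) * (x - x0) = \<theta>"
      and ordinate: "(x - x0) ^ 2 + 2 * d * (x - x0) + y0 \<in> \<theta>Fq"
      using meet by blast
    from x have "(x - x0) ^ 2 + 2 * d * (x - x0) + y0 = (1 + 2 * \<alpha> * y) / y ^ 2 + (\<theta> + y0)"
      using two_d theta_nonzero \<open>y \<noteq> 0\<close> by (rule parabola_meet_ordinate)
    thus False using ordinate y(2) \<theta>Fq_add_cancel[OF \<theta>Fq_add[OF theta_in_\<theta>Fq y0]] by (simp add: add.assoc)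
  qed
qed

lemma strong_II_vertices: "{v. strong_II_vertex (\<lambda>x. x ^ 2) q \<U> v} = {Inf None}"
proof (intro equalityI subsetI)
  fix v assume "v \<in> {v. strong_II_vertex (\<lambda>x. x ^ 2) q \<U> v}"
  hence "strong_II_vertex (\<lambda>x. x ^ 2) q \<U> v" and "v \<in> \<U>" by (simp_all add: strong_II_vertex_def)
  thus "v \<in> {Inf None}"
    using affine_point_not_strong_II_vertex by (cases v) (auto simp: Aff_in_U_iff Inf_in_U_iff)
qed (simp add: strong_II_vertex_infinity)

end

theorem theorem3p9:
  fixes q :: nat and \<theta> :: "'a::{field,finite}"
  assumes "\<exists>p k. prime (p::nat) \<and> k \<ge> 1 \<and> q = p ^ k"
    and "odd q" and "q > 3"
    and "card (UNIV :: 'a set) = q ^ 2"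
    and "\<theta> \<noteq> 0"
    and "\<not> (\<exists>s::'a. s ^ q = s \<and> s ^ 2 = \<theta> ^ (q + 1))"
  shows "{v. strong_II_vertex (\<lambda>x. x ^ 2) q (U_theta q \<theta>) v} = {Inf None}"
proof -
  obtain p k where "prime p" and q: "q = p ^ k" using assms(1) by blast
  hence "CHAR('a) = p"
    using assms(4) by (intro CHAR_eq_if_card_prime_power[of p "k * 2"]) (simp_all add: power_mult)
  interpret unital_setting q "{x. x ^ q = x}" \<theta>
    using assms(2-6) q \<open>CHAR('a) = p\<close> by unfold_locales auto
  show ?thesis by (rule strong_II_vertices)
qed

end
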